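(* Let $\Omega,\epsilon\in\mathbb{R}$ and $T\ge 0$. On a qubit $\mathbb{C}^2$ with basis $\{|0\rangle,|1\rangle\}$, let $\Phi_T^\epsilon$ be the quantum channel mapping $\rho(0)\mapsto\rho(T)$, where $\rho(t)$ solves $$\dot\rho=-i\frac{\Omega+\epsilon}{2}[\sigma_z,\rho]+\Big(\sigma_-\rho\sigma_+-\tfrac12\{\sigma_+\sigma_-,\rho\}\Big)+\Big(\sigma_+\rho\sigma_--\tfrac12\{\sigma_-\sigma_+,\rho\}\Big),$$ with $\sigma_+=|1\rangle\langle 0|$, $\sigma_-=\sigma_+^\dagger$, $\sigma_z$ the Pauli $z$ matrix. Then for every qubit density operator $\rho$, $$G_{\mathrm{ch}}(\Phi_T^0,\Phi_T^\epsilon;\rho)=1-2e^{-2T}\big(1-\cos(\epsilon T)\big)\rho_{00}\rho_{11},$$ where $\rho_{kk}=\langle k|\rho|k\rangle$.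
   Context: Superfidelity: $G(\rho_1,\rho_2)=\operatorname{Tr}(\rho_1\rho_2)+\sqrt{1-\operatorname{Tr}\rho_1^2}\sqrt{1-\operatorname{Tr}\rho_2^2}$. Channel superfidelity of channels $\Phi,\Psi$ on $\mathcal{L}(\mathcal{X})$ at $\sigma\in\mathcal{D}(\mathcal{X})$: $G_{\mathrm{ch}}(\Phi,\Psi;\sigma)=\inf G\big((\Phi\otimes\mathbb{1}_{\mathcal{L}(\mathcal{Z})})(\xi),(\Psi\otimes\mathbb{1}_{\mathcal{L}(\mathcal{Z})})(\xi)\big)$ over all finite-dimensional $\mathcal{Z}$ and all pure states $\xi$ on $\mathcal{X}\otimes\mathcal{Z}$ with $\operatorname{Tr}_{\mathcal{Z}}\xi=\sigma$. $\{A,B\}=AB+BA$. *)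

theory Defs
  imports "HOL-Analysis.Analysis"
begin

text \<open>Qubit operators: complex 2x2 matrices indexed by the numeral type 2,
  basis |0> = index 0, |1> = index 1. Entry M $ i $ j = <i|M|j>.\<close>

type_synonym qop = "complex^2^2"

definition mmul :: "qop \<Rightarrow> qop \<Rightarrow> qop" where
  "mmul A B = (\<chi> i j. \<Sum>k\<in>UNIV. A $ i $ k * B $ k $ j)"

definition madd :: "qop \<Rightarrow> qop \<Rightarrow> qop" where
  "madd A B = (\<chi> i j. A $ i $ j + B $ i $ j)"

definition msub :: "qop \<Rightarrow> qop \<Rightarrow> qop" where
  "msub A B = (\<chi> i j. A $ i $ j - B $ i $ j)"

definition mscale :: "complex \<Rightarrow> qop \<Rightarrow> qop" where
  "mscale c A = (\<chi> i j. c * A $ i $ j)"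

definition madj :: "qop \<Rightarrow> qop" where
  "madj A = (\<chi> i j. cnj (A $ j $ i))"

definition commutator :: "qop \<Rightarrow> qop \<Rightarrow> qop" where
  "commutator A B = msub (mmul A B) (mmul B A)"

definition anticommutator :: "qop \<Rightarrow> qop \<Rightarrow> qop" where
  "anticommutator A B = madd (mmul A B) (mmul B A)"

definition sigma_plus :: qop where
  "sigma_plus = (\<chi> i j. if i = 1 \<and> j = 0 then 1 else 0)"

definition sigma_minus :: qop where
  "sigma_minus = madj sigma_plus"

definition sigma_z :: qop where
  "sigma_z = (\<chi> i j. if i = j then (if i = 0 then 1 else -1) else 0)"

definition dissipator :: "qop \<Rightarrow> qop \<Rightarrow> qop" where
  "dissipator L \<rho> = msub (mmul (mmul L \<rho>) (madj L))
                          (mscale (1/2) (anticommutator (mmul (madj L) L) \<rho>))"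

definition lindbladian :: "real \<Rightarrow> real \<Rightarrow> qop \<Rightarrow> qop" where
  "lindbladian \<Omega> \<epsilon> \<rho> =
     madd (mscale (- \<i> * complex_of_real ((\<Omega> + \<epsilon>) / 2)) (commutator sigma_z \<rho>))
          (madd (dissipator sigma_minus \<rho>) (dissipator sigma_plus \<rho>))"

definition channel :: "real \<Rightarrow> real \<Rightarrow> real \<Rightarrow> qop \<Rightarrow> qop" where
  "channel \<Omega> \<epsilon> T \<rho>0 = (THE M. \<exists>\<rho> :: real \<Rightarrow> qop. \<rho> 0 = \<rho>0 \<and>
      (\<forall>t\<in>{0..T}. (\<rho> has_vector_derivative lindbladian \<Omega> \<epsilon> (\<rho> t)) (at t within {0..T})) \<and>
      \<rho> T = M)"

definition qubit_density :: "qop \<Rightarrow> bool" where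
  "qubit_density \<rho> \<longleftrightarrow>
     (\<forall>i j. \<rho> $ i $ j = cnj (\<rho> $ j $ i)) \<and>
     (\<forall>v :: complex^2. 0 \<le> Re (\<Sum>i\<in>UNIV. \<Sum>j\<in>UNIV. cnj (v $ i) * \<rho> $ i $ j * v $ j)) \<and>
     (\<Sum>i\<in>UNIV. \<rho> $ i $ i) = 1"

text \<open>Operators on X \<otimes> Z with dim Z = n: functions on index pairs (a,k),
  a :: 2, k < n (only indices with k < n are relevant).\<close>
type_synonym bop = "2 \<times> nat \<Rightarrow> 2 \<times> nat \<Rightarrow> complex"

definition idx :: "nat \<Rightarrow> (2 \<times> nat) set" where
  "idx n = UNIV \<times> {..<n}"

definition btrace_prod :: "nat \<Rightarrow> bop \<Rightarrow> bop \<Rightarrow> complex" where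
  "btrace_prod n A B = (\<Sum>p\<in>idx n. \<Sum>q\<in>idx n. A p q * B q p)"

text \<open>Superfidelity G(r1,r2) = Tr(r1 r2) + sqrt(1 - Tr r1^2) sqrt(1 - Tr r2^2)
  (traces are real for Hermitian operators; we take real parts).\<close>
definition superfid :: "nat \<Rightarrow> bop \<Rightarrow> bop \<Rightarrow> real" where
  "superfid n A B = Re (btrace_prod n A B)
      + sqrt (1 - Re (btrace_prod n A A)) * sqrt (1 - Re (btrace_prod n B B))"

definition unit_vec :: "nat \<Rightarrow> (2 \<times> nat \<Rightarrow> complex) \<Rightarrow> bool" where
  "unit_vec n \<psi> \<longleftrightarrow> (\<Sum>p\<in>idx n. (cmod (\<psi> p))\<^sup>2) = 1"

definition proj :: "(2 \<times> nat \<Rightarrow> complex) \<Rightarrow> bop" where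
  "proj \<psi> = (\<lambda>p q. \<psi> p * cnj (\<psi> q))"

definition ptrace_Z :: "nat \<Rightarrow> bop \<Rightarrow> qop" where
  "ptrace_Z n X = (\<chi> a b. \<Sum>k<n. X (a, k) (b, k))"

definition unitm :: "2 \<Rightarrow> 2 \<Rightarrow> qop" where
  "unitm c d = (\<chi> i j. if i = c \<and> j = d then 1 else 0)"

text \<open>(Phi \<otimes> id_Z)(X), using X = sum_{c,d} |c><d| \<otimes> X_cd.\<close>
definition tensor_id :: "(qop \<Rightarrow> qop) \<Rightarrow> bop \<Rightarrow> bop" where
  "tensor_id \<Phi> X = (\<lambda>(a, k) (b, l). \<Sum>c\<in>UNIV. \<Sum>d\<in>UNIV. \<Phi> (unitm c d) $ a $ b * X (c, k) (d, l))"

definition channel_superfid :: "(qop \<Rightarrow> qop) \<Rightarrow> (qop \<Rightarrow> qop) \<Rightarrow> qop \<Rightarrow> real" where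
  "channel_superfid \<Phi> \<Psi> \<sigma> = Inf {superfid n (tensor_id \<Phi> (proj \<psi>)) (tensor_id \<Psi> (proj \<psi>)) | n \<psi>.
       unit_vec n \<psi> \<and> ptrace_Z n (proj \<psi>) = \<sigma>}"

end

theory Submission
  imports Defs
begin

text \<open>The master equation decouples in the matrix entries: the populations relax to their
  mean at rate 2, the coherences decay at rate 1 while rotating with frequency \<open>\<Omega> + \<epsilon>\<close>, so
  \<open>\<Phi>\<^sub>T\<^sup>\<epsilon>\<close> is an explicit damped rotation. For a purification \<open>\<xi>\<close> of \<open>\<rho>\<close>, the trace
  \<open>Tr((\<Phi> \<otimes> 1)(\<xi>) (\<Psi> \<otimes> 1)(\<xi>))\<close> is a bilinear expression in the entries of \<open>\<rho>\<close> alone, so the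
  superfidelity is the same for every purification and the infimum is attained by any of them.
  Evaluating the expression gives the formula; positivity of \<open>\<rho>\<close> guarantees both that a
  purification exists and that the purities under the square roots are at most 1.\<close>

lemma sum_UNIV_2: "sum f (UNIV :: 2 set) = f 0 + f 1"
proof -
  have "(2 :: 2) = 0" by simp
  with sum_2[of f] show ?thesis by (simp add: add.commute)
qed

lemma all_2_iff: "(\<forall>i::2. P i) \<longleftrightarrow> P 0 \<and> P 1"
proof -
  have "(2 :: 2) = 0" by simp
  with forall_2[of P] show ?thesis by auto
qed

lemma exhaust_2_zero_one: "(i :: 2) = 0 \<or> i = 1"
  using all_2_iff[of "\<lambda>i. i = 0 \<or> i = 1"] by simp

lemma has_vector_derivative_vec_iff:
  fixes f :: "real \<Rightarrow> 'a::real_normed_vector ^ 'n"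
  shows "(f has_vector_derivative D) (at x within s) \<longleftrightarrow>
         (\<forall>i. ((\<lambda>t. f t $ i) has_vector_derivative D $ i) (at x within s))"
proof
  assume "(f has_vector_derivative D) (at x within s)"
  then show "\<forall>i. ((\<lambda>t. f t $ i) has_vector_derivative D $ i) (at x within s)"
    using bounded_linear.has_vector_derivative[OF bounded_linear_vec_nth] by blast
next
  assume "\<forall>i. ((\<lambda>t. f t $ i) has_vector_derivative D $ i) (at x within s)"
  then have "((\<lambda>y. (1 / norm (y - x)) *\<^sub>R (f y $ i - (f x $ i + (y - x) *\<^sub>R D $ i))) \<longlongrightarrow> 0)
      (at x within s)" for i
    unfolding has_vector_derivative_def has_derivative_within by blast
  then have "((\<lambda>y. \<chi> i. (1 / norm (y - x)) *\<^sub>R (f y $ i - (f x $ i + (y - x) *\<^sub>R D $ i)))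
      \<longlongrightarrow> (\<chi> i. 0)) (at x within s)"
    by (intro tendsto_vec_lambda) simp
  moreover have "(\<lambda>y. \<chi> i. (1 / norm (y - x)) *\<^sub>R (f y $ i - (f x $ i + (y - x) *\<^sub>R D $ i)))
      = (\<lambda>y. (1 / norm (y - x)) *\<^sub>R (f y - (f x + (y - x) *\<^sub>R D)))"
    by (auto simp: vec_eq_iff)
  ultimately show "(f has_vector_derivative D) (at x within s)"
    unfolding has_vector_derivative_def has_derivative_within
    by (auto intro: bounded_linear_scaleR_left simp: zero_vec_def)
qed

lemma has_vector_derivative_mat_iff:
  fixes f :: "real \<Rightarrow> 'a::real_normed_vector ^ 'n ^ 'm"
  shows "(f has_vector_derivative D) (at x within s) \<longleftrightarrow>
         (\<forall>i j. ((\<lambda>t. f t $ i $ j) has_vector_derivative D $ i $ j) (at x within s))"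
  by (simp add: has_vector_derivative_vec_iff)

lemma exp_linear_has_vector_derivative:
  "((\<lambda>t. a + b * exp (k * complex_of_real t)) has_vector_derivative k * b * exp (k * complex_of_real t))
     (at t within s)"
  by (rule has_vector_derivative_real_field) (auto intro!: derivative_eq_intros)

lemma linear_ode_solution_eq_exp:
  fixes z :: "real \<Rightarrow> complex"
  assumes "T \<ge> 0"
    and deriv: "\<And>t. t \<in> {0..T} \<Longrightarrow> (z has_vector_derivative k * z t) (at t within {0..T})"
  shows "z T = z 0 * exp (k * complex_of_real T)"
proof -
  define w where "w t = z t * exp (- k * complex_of_real t)" for t
  have "(w has_vector_derivative 0) (at t within {0..T})" if "t \<in> {0..T}" for t
  proof -
    have "(w has_vector_derivative z t * (- k * exp (- k * complex_of_real t))
        + k * z t * exp (- k * complex_of_real t)) (at t within {0..T})"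
      unfolding w_def using exp_linear_has_vector_derivative[of 0 1 "- k"]
      by (intro has_vector_derivative_mult deriv that) simp
    then show ?thesis by (simp add: algebra_simps)
  qed
  then obtain c where "\<And>t. t \<in> {0..T} \<Longrightarrow> w t = c"
    using has_vector_derivative_zero_constant[of "{0..T}" w] by blast
  then have "w T = w 0" using \<open>T \<ge> 0\<close> by auto
  then have "z T * exp (- k * complex_of_real T) * exp (k * complex_of_real T)
      = z 0 * exp (k * complex_of_real T)" by (simp add: w_def)
  then show ?thesis by (simp add: mult.assoc exp_add[symmetric])
qed

subsection \<open>The channel as a damped rotation\<close>

lemma lindbladian_nth:
  "lindbladian \<Omega> \<epsilon> X $ 0 $ 0 = X $ 1 $ 1 - X $ 0 $ 0"
  "lindbladian \<Omega> \<epsilon> X $ 1 $ 1 = X $ 0 $ 0 - X $ 1 $ 1"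
  "lindbladian \<Omega> \<epsilon> X $ 0 $ 1 = (-1 - \<i> * complex_of_real (\<Omega> + \<epsilon>)) * X $ 0 $ 1"
  "lindbladian \<Omega> \<epsilon> X $ 1 $ 0 = (-1 + \<i> * complex_of_real (\<Omega> + \<epsilon>)) * X $ 1 $ 0"
  unfolding lindbladian_def madd_def msub_def mscale_def mmul_def commutator_def
    anticommutator_def dissipator_def sigma_minus_def sigma_plus_def madj_def sigma_z_def
  by (simp_all add: sum_UNIV_2 field_simps)

definition damped_rotation :: "real \<Rightarrow> real \<Rightarrow> qop \<Rightarrow> qop" where
  "damped_rotation \<omega> t X = (\<chi> i j.
     if i = 0 \<and> j = 0 then (X$0$0 + X$1$1 + (X$0$0 - X$1$1) * exp (-2 * complex_of_real t)) / 2
     else if i = 1 \<and> j = 1 then (X$0$0 + X$1$1 - (X$0$0 - X$1$1) * exp (-2 * complex_of_real t)) / 2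
     else if i = 0 \<and> j = 1 then X$0$1 * exp ((-1 - \<i> * complex_of_real \<omega>) * complex_of_real t)
     else X$1$0 * exp ((-1 + \<i> * complex_of_real \<omega>) * complex_of_real t))"

lemma damped_rotation_0: "damped_rotation \<omega> 0 X = X"
  by (simp add: vec_eq_iff all_2_iff damped_rotation_def)

lemma damped_rotation_solves_lindblad:
  "((\<lambda>t. damped_rotation (\<Omega> + \<epsilon>) t X) has_vector_derivative
      lindbladian \<Omega> \<epsilon> (damped_rotation (\<Omega> + \<epsilon>) t X)) (at t within s)"
proof -
  let ?E = "\<lambda>t. damped_rotation (\<Omega> + \<epsilon>) t X"
  let ?e = "\<lambda>k t. exp (k * complex_of_real t)"
  have "(\<lambda>t. ?E t $ 0 $ 0) = (\<lambda>t. (X$0$0 + X$1$1)/2 + ((X$0$0 - X$1$1)/2) * ?e (-2) t)"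
    and "(\<lambda>t. ?E t $ 1 $ 1) = (\<lambda>t. (X$0$0 + X$1$1)/2 + (-(X$0$0 - X$1$1)/2) * ?e (-2) t)"
    and "(\<lambda>t. ?E t $ 0 $ 1) = (\<lambda>t. 0 + X$0$1 * ?e (-1 - \<i> * complex_of_real (\<Omega> + \<epsilon>)) t)"
    and "(\<lambda>t. ?E t $ 1 $ 0) = (\<lambda>t. 0 + X$1$0 * ?e (-1 + \<i> * complex_of_real (\<Omega> + \<epsilon>)) t)"
    by (auto simp: damped_rotation_def field_simps)
  note entries = this[THEN arg_cong[where f = "\<lambda>f. (f has_vector_derivative _) (at t within s)"]]
  show ?thesis
    unfolding has_vector_derivative_mat_iff all_2_iff lindbladian_nth entries
    by (intro conjI; rule has_vector_derivative_eq_rhs[OF exp_linear_has_vector_derivative],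
        simp add: damped_rotation_def field_simps)
qed

lemma lindblad_solution_eq_damped_rotation:
  assumes "T \<ge> 0"
    and deriv: "\<forall>t\<in>{0..T}. (\<rho> has_vector_derivative lindbladian \<Omega> \<epsilon> (\<rho> t)) (at t within {0..T})"
  shows "\<rho> T = damped_rotation (\<Omega> + \<epsilon>) T (\<rho> 0)"
proof -
  let ?w = "complex_of_real (\<Omega> + \<epsilon>)"
  have entry: "((\<lambda>t. \<rho> t $ i $ j) has_vector_derivative lindbladian \<Omega> \<epsilon> (\<rho> t) $ i $ j)
      (at t within {0..T})" if "t \<in> {0..T}" for i j t
    using deriv that by (simp add: has_vector_derivative_mat_iff)
  have trace: "\<rho> T $ 0 $ 0 + \<rho> T $ 1 $ 1 = \<rho> 0 $ 0 $ 0 + \<rho> 0 $ 1 $ 1"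
    using linear_ode_solution_eq_exp[OF \<open>T \<ge> 0\<close>, of "\<lambda>t. \<rho> t $ 0 $ 0 + \<rho> t $ 1 $ 1" 0]
      has_vector_derivative_add[OF entry entry, of _ 0 0 1 1]
    by (simp add: lindbladian_nth)
  have imbalance: "\<rho> T $ 0 $ 0 - \<rho> T $ 1 $ 1
      = (\<rho> 0 $ 0 $ 0 - \<rho> 0 $ 1 $ 1) * exp (-2 * complex_of_real T)"
    using linear_ode_solution_eq_exp[OF \<open>T \<ge> 0\<close>, of "\<lambda>t. \<rho> t $ 0 $ 0 - \<rho> t $ 1 $ 1" "-2"]
      has_vector_derivative_diff[OF entry entry, of _ 0 0 1 1]
    by (simp add: lindbladian_nth algebra_simps)
  have "\<rho> T $ 0 $ 1 = \<rho> 0 $ 0 $ 1 * exp ((-1 - \<i> * ?w) * complex_of_real T)"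
    by (rule linear_ode_solution_eq_exp[OF \<open>T \<ge> 0\<close>]) (rule entry[of _ 0 1, unfolded lindbladian_nth])
  moreover have "\<rho> T $ 1 $ 0 = \<rho> 0 $ 1 $ 0 * exp ((-1 + \<i> * ?w) * complex_of_real T)"
    by (rule linear_ode_solution_eq_exp[OF \<open>T \<ge> 0\<close>]) (rule entry[of _ 1 0, unfolded lindbladian_nth])
  moreover have "\<rho> T $ 0 $ 0 = (\<rho> T $ 0 $ 0 + \<rho> T $ 1 $ 1 + (\<rho> T $ 0 $ 0 - \<rho> T $ 1 $ 1)) / 2"
    and "\<rho> T $ 1 $ 1 = (\<rho> T $ 0 $ 0 + \<rho> T $ 1 $ 1 - (\<rho> T $ 0 $ 0 - \<rho> T $ 1 $ 1)) / 2"
    by simp_all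
  ultimately show ?thesis
    unfolding vec_eq_iff all_2_iff damped_rotation_def trace imbalance by simp
qed

lemma channel_eq_damped_rotation:
  assumes "T \<ge> 0"
  shows "channel \<Omega> \<epsilon> T X = damped_rotation (\<Omega> + \<epsilon>) T X"
  unfolding channel_def
proof (rule the_equality)
  show "\<exists>\<rho>. \<rho> 0 = X \<and> (\<forall>t\<in>{0..T}. (\<rho> has_vector_derivative lindbladian \<Omega> \<epsilon> (\<rho> t)) (at t within {0..T}))
      \<and> \<rho> T = damped_rotation (\<Omega> + \<epsilon>) T X"
    by (intro exI[of _ "\<lambda>t. damped_rotation (\<Omega> + \<epsilon>) t X"])
      (simp add: damped_rotation_0 damped_rotation_solves_lindblad)
qed (use lindblad_solution_eq_damped_rotation[OF assms] in blast)

lemma damped_rotation_unitm: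
  "damped_rotation \<omega> T (unitm c d) $ a $ b =
    (if c = d then (if a = b then (1 + (if a = c then 1 else -1) * exp (-2 * complex_of_real T)) / 2 else 0)
     else if a = c \<and> b = d then
       (if c = 0 then exp ((-1 - \<i> * complex_of_real \<omega>) * complex_of_real T)
        else exp ((-1 + \<i> * complex_of_real \<omega>) * complex_of_real T))
     else 0)"
  using exhaust_2_zero_one
  by (cases "a = 0"; cases "b = 0"; cases "c = 0"; cases "d = 0"; simp add: damped_rotation_def unitm_def; metis)

subsection \<open>Overlaps of extended channel outputs\<close>

lemma btrace_prod_tensor_id_proj:
  "btrace_prod n (tensor_id \<Phi> (proj \<psi>)) (tensor_id \<Psi> (proj \<psi>)) =
   (\<Sum>a\<in>UNIV. \<Sum>b\<in>UNIV. \<Sum>c\<in>UNIV. \<Sum>d\<in>UNIV. \<Sum>c'\<in>UNIV. \<Sum>d'\<in>UNIV.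
      \<Phi> (unitm c d) $ a $ b * \<Psi> (unitm c' d') $ b $ a
      * ptrace_Z n (proj \<psi>) $ c $ d' * ptrace_Z n (proj \<psi>) $ c' $ d)"
proof -
  define F where "F a k b l c d c' d' = \<Phi> (unitm c d) $ a $ b * \<Psi> (unitm c' d') $ b $ a *
      (\<psi> (c, k) * cnj (\<psi> (d', k))) * (\<psi> (c', l) * cnj (\<psi> (d, l)))" for a k b l c d c' d'
  have "btrace_prod n (tensor_id \<Phi> (proj \<psi>)) (tensor_id \<Psi> (proj \<psi>)) =
     (\<Sum>a\<in>UNIV. \<Sum>k<n. \<Sum>b\<in>UNIV. \<Sum>l<n. \<Sum>c\<in>UNIV. \<Sum>d\<in>UNIV. \<Sum>c'\<in>UNIV. \<Sum>d'\<in>UNIV. F a k b l c d c' d')"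
    unfolding btrace_prod_def idx_def sum.cartesian_product' tensor_id_def proj_def split
    by (simp only: sum_distrib_right) (simp add: F_def sum_distrib_left mult_ac)
  also have "\<dots> = (\<Sum>a\<in>UNIV. \<Sum>b\<in>UNIV. \<Sum>c\<in>UNIV. \<Sum>d\<in>UNIV. \<Sum>c'\<in>UNIV. \<Sum>d'\<in>UNIV.
      \<Sum>k<n. \<Sum>l<n. F a k b l c d c' d')"
    by (simp add: sum.swap[where A = "{..<n}" and B = "UNIV :: 2 set"])
  also have "\<dots> = (\<Sum>a\<in>UNIV. \<Sum>b\<in>UNIV. \<Sum>c\<in>UNIV. \<Sum>d\<in>UNIV. \<Sum>c'\<in>UNIV. \<Sum>d'\<in>UNIV.
      \<Phi> (unitm c d) $ a $ b * \<Psi> (unitm c' d') $ b $ a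
      * ptrace_Z n (proj \<psi>) $ c $ d' * ptrace_Z n (proj \<psi>) $ c' $ d)"
    by (simp add: F_def ptrace_Z_def proj_def sum_distrib_left sum_distrib_right sum_product mult_ac)
  finally show ?thesis .
qed

lemma btrace_prod_channels_proj:
  assumes "T \<ge> 0" and "ptrace_Z n (proj \<psi>) = \<sigma>"
  shows "btrace_prod n (tensor_id (channel \<Omega> \<epsilon>\<^sub>1 T) (proj \<psi>)) (tensor_id (channel \<Omega> \<epsilon>\<^sub>2 T) (proj \<psi>)) =
    (1 + exp (-2 * complex_of_real T)^2) / 2 * ((\<sigma> $ 0 $ 0)^2 + (\<sigma> $ 1 $ 1)^2)
    + (1 - exp (-2 * complex_of_real T)^2) * \<sigma> $ 0 $ 1 * \<sigma> $ 1 $ 0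
    + (exp ((-1 - \<i> * complex_of_real (\<Omega> + \<epsilon>\<^sub>1)) * complex_of_real T)
         * exp ((-1 + \<i> * complex_of_real (\<Omega> + \<epsilon>\<^sub>2)) * complex_of_real T)
       + exp ((-1 + \<i> * complex_of_real (\<Omega> + \<epsilon>\<^sub>1)) * complex_of_real T)
         * exp ((-1 - \<i> * complex_of_real (\<Omega> + \<epsilon>\<^sub>2)) * complex_of_real T))
      * \<sigma> $ 0 $ 0 * \<sigma> $ 1 $ 1"
  unfolding btrace_prod_tensor_id_proj channel_eq_damped_rotation[OF assms(1)] damped_rotation_unitm assms(2)
  by (simp add: sum_UNIV_2) (simp add: field_simps power2_eq_square)

lemma exp_damped_phases_mult:
  "exp ((-1 - \<i> * complex_of_real \<alpha>) * complex_of_real T) * exp ((-1 + \<i> * complex_of_real \<beta>) * complex_of_real T)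
   = complex_of_real (exp (-2 * T)) * cis ((\<beta> - \<alpha>) * T)"
proof -
  have "(-1 - \<i> * complex_of_real \<alpha>) * complex_of_real T + (-1 + \<i> * complex_of_real \<beta>) * complex_of_real T
     = complex_of_real (-2 * T) + \<i> * complex_of_real ((\<beta> - \<alpha>) * T)"
    by (simp add: algebra_simps)
  then show ?thesis
    by (simp only: exp_add[symmetric]) (simp only: exp_add exp_of_real cis_conv_exp)
qed

lemma re_btrace_prod_channels_proj:
  assumes "T \<ge> 0" and "ptrace_Z n (proj \<psi>) = \<sigma>"
    and "\<sigma> $ 0 $ 0 = complex_of_real a" and "\<sigma> $ 1 $ 1 = complex_of_real d"
    and "\<sigma> $ 0 $ 1 = Complex x y" and "\<sigma> $ 1 $ 0 = Complex x (-y)"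
  shows "Re (btrace_prod n (tensor_id (channel \<Omega> \<epsilon>\<^sub>1 T) (proj \<psi>)) (tensor_id (channel \<Omega> \<epsilon>\<^sub>2 T) (proj \<psi>)))
    = (1 + exp (-2 * T)^2) / 2 * (a^2 + d^2) + (1 - exp (-2 * T)^2) * (x^2 + y^2)
      + 2 * exp (-2 * T) * cos ((\<epsilon>\<^sub>2 - \<epsilon>\<^sub>1) * T) * a * d"
proof -
  have exp_real: "exp (-2 * complex_of_real T) = complex_of_real (exp (-2 * T))"
    by (simp add: exp_of_real[symmetric])
  have phases_swapped: "exp ((-1 + \<i> * complex_of_real \<alpha>) * complex_of_real T)
      * exp ((-1 - \<i> * complex_of_real \<beta>) * complex_of_real T)
     = complex_of_real (exp (-2 * T)) * cis ((\<alpha> - \<beta>) * T)" for \<alpha> \<beta>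
    using exp_damped_phases_mult[of \<beta> T \<alpha>] by (simp add: mult.commute)
  have cos_swap: "cos (u - v) = cos (v - u)" for u v :: real
    by (metis cos_minus minus_diff_eq)
  show ?thesis
    unfolding btrace_prod_channels_proj[OF assms(1,2)] assms(3-6) exp_real
      exp_damped_phases_mult phases_swapped
    by (simp add: cos_swap[of "T * \<epsilon>\<^sub>1"] power2_eq_square algebra_simps)
qed

text \<open>The left-hand side is the purity \<open>Tr((\<Phi>\<^sub>T\<^sup>\<epsilon> \<otimes> 1)(\<xi>)\<^sup>2)\<close> for \<open>q = e\<^sup>-\<^sup>2\<^sup>T\<close>; it is at most 1
  because \<open>|\<rho>\<^sub>0\<^sub>1|\<^sup>2 \<le> \<rho>\<^sub>0\<^sub>0 \<rho>\<^sub>1\<^sub>1 \<le> 1/4\<close>.\<close>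
lemma damped_purity_le_1:
  fixes a d x y q :: real
  assumes "a + d = 1" "x^2 + y^2 \<le> a * d" "0 \<le> q" "q \<le> 1"
  shows "(1 + q^2) / 2 * (a^2 + d^2) + (1 - q^2) * (x^2 + y^2) + 2 * q * a * d \<le> 1"
proof -
  have d: "d = 1 - a" using assms(1) by simp
  have "(1 - q^2) * (x^2 + y^2) \<le> (1 - q^2) * (a * d)"
    using assms(2-4) by (intro mult_left_mono) (simp_all add: power_le_one)
  then have "(1 + q^2) / 2 * (a^2 + d^2) + (1 - q^2) * (x^2 + y^2) + 2 * q * a * d
      \<le> (1 + q^2) / 2 * (a^2 + d^2) + (1 - q^2) * (a * d) + 2 * q * a * d"
    by linarith
  also have "\<dots> = (1 + q^2) / 2 + 2 * (q * (1 - q) * (a * d))"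
    unfolding d by (simp add: power2_eq_square field_simps)
  also have "\<dots> \<le> (1 + q^2) / 2 + 2 * (q * (1 - q) * (1/4))"
  proof -
    have "a * d \<le> 1/4"
      unfolding d using sum_squares_ge_zero[of "a - 1/2" 0] by (simp add: power2_eq_square algebra_simps)
    moreover have "0 \<le> q * (1 - q)" using assms(3,4) by simp
    ultimately show ?thesis by (intro add_left_mono mult_left_mono) simp_all
  qed
  also have "\<dots> = (1 + q) / 2"
    by (simp add: power2_eq_square field_simps)
  also have "\<dots> \<le> 1"
    using assms(4) by simp
  finally show ?thesis .
qed

lemma qubit_density_entries:
  assumes "qubit_density \<rho>"
  obtains a d x y where "\<rho> $ 0 $ 0 = complex_of_real a" "\<rho> $ 1 $ 1 = complex_of_real d"
    "\<rho> $ 0 $ 1 = Complex x y" "\<rho> $ 1 $ 0 = Complex x (-y)" "a + d = 1" "a \<ge> 0" "d \<ge> 0"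
    "x^2 + y^2 \<le> a * d"
proof -
  have herm: "\<And>i j. \<rho> $ i $ j = cnj (\<rho> $ j $ i)"
    and psd: "\<And>v :: complex^2. 0 \<le> Re (\<Sum>i\<in>UNIV. \<Sum>j\<in>UNIV. cnj (v $ i) * \<rho> $ i $ j * v $ j)"
    and tr: "(\<Sum>i\<in>UNIV. \<rho> $ i $ i) = 1"
    using assms unfolding qubit_density_def by blast+
  define a d x y where "a = Re (\<rho> $ 0 $ 0)" and "d = Re (\<rho> $ 1 $ 1)"
    and "x = Re (\<rho> $ 0 $ 1)" and "y = Im (\<rho> $ 0 $ 1)"
  have ea: "\<rho> $ 0 $ 0 = complex_of_real a" and ed: "\<rho> $ 1 $ 1 = complex_of_real d"
    and eb: "\<rho> $ 0 $ 1 = Complex x y" and ec: "\<rho> $ 1 $ 0 = Complex x (-y)"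
    using herm[of 0 0] herm[of 1 1] herm[of 1 0]
    unfolding a_def d_def x_def y_def by (simp_all add: complex_eq_iff)
  have ad: "a + d = 1" using tr ea ed by (simp add: sum_UNIV_2 complex_eq_iff)
  let ?v = "\<lambda>p q. (\<chi> i. if i = 0 then p else q) :: complex^2"
  have quadratic_form: "Re (\<Sum>i\<in>UNIV. \<Sum>j\<in>UNIV. cnj (?v p q $ i) * \<rho> $ i $ j * ?v p q $ j) =
     a * (Re p * Re p + Im p * Im p) + d * (Re q * Re q + Im q * Im q)
     + 2 * (x * (Re p * Re q + Im p * Im q) - y * (Re p * Im q - Im p * Re q))" for p q
    by (simp add: sum_UNIV_2 ea ed eb ec algebra_simps)
  have a0: "a \<ge> 0" and d0: "d \<ge> 0" using psd[of "?v 1 0"] psd[of "?v 0 1"] unfolding quadratic_form by simp_all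
  text \<open>Testing positivity on \<open>(b, -a)\<close> and \<open>(d, -b\<^sup>*)\<close> gives \<open>a (a d - |b|\<^sup>2) \<ge> 0\<close> and
    \<open>d (a d - |b|\<^sup>2) \<ge> 0\<close>; their sum is \<open>a d - |b|\<^sup>2\<close>.\<close>
  have "0 \<le> a * (a * d - (x^2 + y^2))"
    using psd[of "?v (Complex x y) (- complex_of_real a)"] unfolding quadratic_form
    by (simp add: algebra_simps power2_eq_square)
  moreover have "0 \<le> d * (a * d - (x^2 + y^2))"
    using psd[of "?v (complex_of_real d) (- Complex x (-y))"] unfolding quadratic_form
    by (simp add: algebra_simps power2_eq_square)
  ultimately have "0 \<le> (a + d) * (a * d - (x^2 + y^2))" by (simp add: distrib_right)
  then have "x^2 + y^2 \<le> a * d" using ad by simp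
  with that ea ed eb ec ad a0 d0 show ?thesis by blast
qed

lemma qubit_density_purification:
  assumes "qubit_density \<rho>"
  shows "\<exists>n \<psi>. unit_vec n \<psi> \<and> ptrace_Z n (proj \<psi>) = \<rho>"
proof -
  obtain a d x y where ea: "\<rho> $ 0 $ 0 = complex_of_real a" and ed: "\<rho> $ 1 $ 1 = complex_of_real d"
    and eb: "\<rho> $ 0 $ 1 = Complex x y" and ec: "\<rho> $ 1 $ 0 = Complex x (-y)" and ad: "a + d = 1"
    and a0: "a \<ge> 0" and "d \<ge> 0" and xy: "x^2 + y^2 \<le> a * d"
    by (rule qubit_density_entries[OF assms])
  show ?thesis
  proof (cases "a = 0")
    case True
    then have "x = 0" and "y = 0" using xy by (simp_all add: sum_power2_le_zero_iff)
    define \<psi> :: "2 \<times> nat \<Rightarrow> complex" where "\<psi> p = (if p = (1, 0) then 1 else 0)" for p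
    have "unit_vec 1 \<psi>" by (simp add: unit_vec_def idx_def sum.cartesian_product' sum_UNIV_2 \<psi>_def)
    moreover have "ptrace_Z 1 (proj \<psi>) = \<rho>"
      unfolding vec_eq_iff all_2_iff using ea ed eb ec True ad \<open>x = 0\<close> \<open>y = 0\<close>
      by (simp add: ptrace_Z_def proj_def \<psi>_def complex_eq_iff)
    ultimately show ?thesis by blast
  next
    case False
    then have "a > 0" using a0 by simp
    text \<open>A Cholesky factor of \<open>\<rho>\<close>: its two columns are the components of \<open>\<psi>\<close> along \<open>Z\<close>.\<close>
    define s where "s = sqrt (d - (x^2 + y^2) / a)"
    have s2: "s * s = d - (x^2 + y^2) / a" unfolding s_def using xy \<open>a > 0\<close> by (simp add: field_simps)
    have sa: "sqrt a * sqrt a = a" using a0 by simp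
    define \<psi> :: "2 \<times> nat \<Rightarrow> complex" where "\<psi> p = (if p = (0, 0) then complex_of_real (sqrt a)
       else if p = (1, 0) then Complex x (-y) / complex_of_real (sqrt a)
       else if p = (1, 1) then complex_of_real s else 0)" for p
    have n2: "{..<2::nat} = {0, 1}" by auto
    have "unit_vec 2 \<psi>"
      unfolding unit_vec_def idx_def sum.cartesian_product' sum_UNIV_2 n2 using \<open>a > 0\<close> ad s2 sa
      by (simp add: \<psi>_def norm_divide cmod_def power2_eq_square field_simps)
    moreover have "ptrace_Z 2 (proj \<psi>) = \<rho>"
      unfolding vec_eq_iff all_2_iff using ea ed eb ec \<open>a > 0\<close> s2 sa
      by (simp add: ptrace_Z_def proj_def \<psi>_def n2 complex_eq_iff field_simps power2_eq_square)
    ultimately show ?thesis by blast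
  qed
qed

lemma superfid_channels_purification:
  assumes "T \<ge> 0" and "qubit_density \<rho>" and "ptrace_Z n (proj \<psi>) = \<rho>"
  shows "superfid n (tensor_id (channel \<Omega> 0 T) (proj \<psi>)) (tensor_id (channel \<Omega> \<epsilon> T) (proj \<psi>))
       = 1 - 2 * exp (-2 * T) * (1 - cos (\<epsilon> * T)) * Re (\<rho> $ 0 $ 0) * Re (\<rho> $ 1 $ 1)"
proof -
  obtain a d x y where entries: "\<rho> $ 0 $ 0 = complex_of_real a" "\<rho> $ 1 $ 1 = complex_of_real d"
    "\<rho> $ 0 $ 1 = Complex x y" "\<rho> $ 1 $ 0 = Complex x (-y)"
    and "a + d = 1" "a \<ge> 0" "d \<ge> 0" "x^2 + y^2 \<le> a * d"
    by (rule qubit_density_entries[OF assms(2)])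
  define q where "q = exp (-2 * T)"
  define P where "P = (1 + q^2) / 2 * (a^2 + d^2) + (1 - q^2) * (x^2 + y^2) + 2 * q * a * d"
  have "q \<le> 1" using assms(1) by (simp add: q_def)
  then have "P \<le> 1"
    unfolding P_def using \<open>a + d = 1\<close> \<open>x^2 + y^2 \<le> a * d\<close> by (intro damped_purity_le_1) (simp_all add: q_def)
  then have "sqrt (1 - P) * sqrt (1 - P) = 1 - P" by simp
  moreover note overlap = re_btrace_prod_channels_proj[OF assms(1,3) entries, of \<Omega>, folded q_def]
  ultimately show ?thesis
    unfolding superfid_def overlap[of 0 \<epsilon>] overlap[of 0 0] overlap[of \<epsilon> \<epsilon>] entries
    by (simp add: P_def q_def algebra_simps)
qed

theorem mainTheorem7:
  fixes \<Omega> \<epsilon> T :: real and \<rho> :: qop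
  assumes "T \<ge> 0" and "qubit_density \<rho>"
  shows "channel_superfid (channel \<Omega> 0 T) (channel \<Omega> \<epsilon> T) \<rho>
       = 1 - 2 * exp (-2 * T) * (1 - cos (\<epsilon> * T)) * Re (\<rho> $ 0 $ 0) * Re (\<rho> $ 1 $ 1)"
proof -
  let ?v = "1 - 2 * exp (-2 * T) * (1 - cos (\<epsilon> * T)) * Re (\<rho> $ 0 $ 0) * Re (\<rho> $ 1 $ 1)"
  obtain n \<psi> where "unit_vec n \<psi>" and "ptrace_Z n (proj \<psi>) = \<rho>"
    using qubit_density_purification[OF assms(2)] by blast
  then have "{superfid n (tensor_id (channel \<Omega> 0 T) (proj \<psi>)) (tensor_id (channel \<Omega> \<epsilon> T) (proj \<psi>)) | n \<psi>.
       unit_vec n \<psi> \<and> ptrace_Z n (proj \<psi>) = \<rho>} = {?v}"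
    using superfid_channels_purification[OF assms] by (auto intro!: exI[of _ n] exI[of _ \<psi>])
  then show ?thesis unfolding channel_superfid_def by simp
qed

end
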